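(* Consider a slotted system with diversity. There are $N$ users, $N_{sub}\ge2$ sub-carriers and slots $1,\dots,T$. In each slot the BS chooses a user via $\pi_u$ and a sub-carrier via $\pi_s$; these algorithms may be randomized and history dependent. It then sends an update to that user on that sub-carrier. The adversary uses a blocking matrix $\sigma\in\{0,1\}^{N_{sub}\times T}$, where $\sigma_j(t)=0$ means sub-carrier $j$ is blocked in slot $t$. Feasibility means $\sum_{j,t}(1-\sigma_j(t))\le\alpha T$ and at most one sub-carrier is blocked per slot, where $0<\alpha<1$. Ages satisfy $a_i(1)=1$, $a_i(t+1)=1$ if user $i$ is chosen in slot $t$ on an unblocked sub-carrier, and $a_i(t+1)=a_i(t)+1$ otherwise. Let $\Delta^{\pi_u,\pi_s,\sigma}=\frac1T\sum_{t=1}^T\frac1N\sum_i\mathbb E[a_i(t)]$ and $\Delta^*(T)=\sup_\sigma\inf_{\pi_u,\pi_s}\Delta^{\pi_u,\pi_s,\sigma}$. Let "unif" denote choosing, independently in every slot, a uniformly random user and a uniformly random sub-carrier. Then $$\limsup_{T\to\infty}\frac{\sup_\sigma\Delta^{\mathrm{unif},\mathrm{unif},\sigma}}{\Delta^*(T)}\le\frac{2N_{sub}}{N_{sub}-1}.$$ *)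

theory Defs
  imports "HOL-Probability.Probability"
begin

text \<open>Users are 0..<N, sub-carriers are 0..<Nsub, slots are 1..T.
  A choice sequence c :: nat => nat * nat gives, in slot t, the chosen
  (user, sub-carrier) pair c t.\<close>

definition feasible_block ::
  "nat \<Rightarrow> nat \<Rightarrow> real \<Rightarrow> (nat \<Rightarrow> nat \<Rightarrow> nat) \<Rightarrow> bool" where
  "feasible_block Nsub T \<alpha> \<sigma> \<longleftrightarrow>
     (\<forall>j<Nsub. \<forall>t\<in>{1..T}. \<sigma> j t \<in> {0, 1}) \<and>
     real (\<Sum>j<Nsub. \<Sum>t=1..T. 1 - \<sigma> j t) \<le> \<alpha> * real T \<and>
     (\<forall>t\<in>{1..T}. card {j. j < Nsub \<and> \<sigma> j t = 0} \<le> 1)"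

text \<open>Age of user i at slot t: a_i(1) = 1, a_i(t+1) = 1 if user i is chosen in slot t on an
  unblocked sub-carrier, a_i(t+1) = a_i(t)+1 otherwise. (Index 0 is a dummy value.)\<close>

primrec age :: "(nat \<Rightarrow> nat \<Rightarrow> nat) \<Rightarrow> (nat \<Rightarrow> nat \<times> nat) \<Rightarrow> nat \<Rightarrow> nat \<Rightarrow> nat" where
  "age \<sigma> c i 0 = 1"
| "age \<sigma> c i (Suc t) =
     (if t = 0 then 1
      else if fst (c t) = i \<and> \<sigma> (snd (c t)) t = 1 then 1
      else age \<sigma> c i t + 1)"

definition avg_age ::
  "nat \<Rightarrow> nat \<Rightarrow> (nat \<Rightarrow> nat \<Rightarrow> nat) \<Rightarrow> (nat \<Rightarrow> nat \<times> nat) \<Rightarrow> real" where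
  "avg_age N T \<sigma> c =
     (1 / real T) * (\<Sum>t=1..T. (1 / real N) * (\<Sum>i<N. real (age \<sigma> c i t)))"

text \<open>A (possibly randomized, history dependent) scheduling policy pair (pi_u, pi_s),
  run against a fixed blocking matrix, induces a probability distribution over the
  sequence of (user, sub-carrier) choices; we represent a policy by that distribution.\<close>

definition valid_policy ::
  "nat \<Rightarrow> nat \<Rightarrow> nat \<Rightarrow> (nat \<Rightarrow> nat \<times> nat) pmf \<Rightarrow> bool" where
  "valid_policy N Nsub T p \<longleftrightarrow>
     (\<forall>c\<in>set_pmf p. \<forall>t\<in>{1..T}. fst (c t) < N \<and> snd (c t) < Nsub)"

definition Delta ::
  "nat \<Rightarrow> nat \<Rightarrow> (nat \<Rightarrow> nat \<Rightarrow> nat) \<Rightarrow> (nat \<Rightarrow> nat \<times> nat) pmf \<Rightarrow> real" where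
  "Delta N T \<sigma> p = measure_pmf.expectation p (avg_age N T \<sigma>)"

definition Delta_opt :: "nat \<Rightarrow> nat \<Rightarrow> real \<Rightarrow> nat \<Rightarrow> real" where
  "Delta_opt N Nsub \<alpha> T =
     (SUP \<sigma>\<in>{\<sigma>. feasible_block Nsub T \<alpha> \<sigma>}.
        INF p\<in>{p. valid_policy N Nsub T p}. Delta N T \<sigma> p)"

definition unif_policy :: "nat \<Rightarrow> nat \<Rightarrow> nat \<Rightarrow> (nat \<Rightarrow> nat \<times> nat) pmf" where
  "unif_policy N Nsub T =
     Pi_pmf {1..T} (0, 0) (\<lambda>_. pmf_of_set ({..<N} \<times> {..<Nsub}))"

definition Delta_unif_worst :: "nat \<Rightarrow> nat \<Rightarrow> real \<Rightarrow> nat \<Rightarrow> real" where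
  "Delta_unif_worst N Nsub \<alpha> T =
     (SUP \<sigma>\<in>{\<sigma>. feasible_block Nsub T \<alpha> \<sigma>}. Delta N T \<sigma> (unif_policy N Nsub T))"

end

(*
  Lower bound, valid for every policy and every blocking matrix: in slot t, a user whose age
  is below t was last served in slot t - a_i(t), so the ages below t are pairwise distinct
  positive integers. Once t >= N the N ages therefore sum to at least N(N+1)/2, and for
  T >= N^2 the time-averaged age is at least N/2.

  Upper bound for unif: at most one sub-carrier is blocked per slot, so in every slot unif
  delivers an update to user i with probability at least q = (Nsub - 1)/(N Nsub),
  independently across slots. The age a_i(t) counts the slots m <= t such that no update
  reaches i in slots m, ..., t - 1, hence E a_i(t) <= sum_k (1 - q)^k <= 1/q.

  The ratio is thus at most (1/q)/(N/2) = 2 Nsub/(Nsub - 1).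
*)
theory Submission
  imports Defs
begin

definition delivers :: "(nat \<Rightarrow> nat \<Rightarrow> nat) \<Rightarrow> nat \<Rightarrow> nat \<Rightarrow> nat \<times> nat \<Rightarrow> bool" where
  "delivers \<sigma> i s x \<longleftrightarrow> fst x = i \<and> \<sigma> (snd x) s = 1"

lemma age_Suc_eq [simp]:
  "age \<sigma> c i (Suc t) = (if t = 0 \<or> delivers \<sigma> i t (c t) then 1 else Suc (age \<sigma> c i t))"
  by (simp add: delivers_def)

declare age.simps(2) [simp del]

lemma age_ge_1: "1 \<le> age \<sigma> c i t"
  by (cases t) auto

lemma age_le_slot: "1 \<le> t \<Longrightarrow> age \<sigma> c i t \<le> t"
  by (induction t) auto

lemma age_lt_slot_imp_chosen: "age \<sigma> c i t < t \<Longrightarrow> fst (c (t - age \<sigma> c i t)) = i"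
  by (induction t) (auto simp: delivers_def)

lemma inj_on_age_below_slot: "inj_on (\<lambda>i. age \<sigma> c i t) {i. age \<sigma> c i t < t}"
  by (rule inj_onI) (metis age_lt_slot_imp_chosen mem_Collect_eq)

lemma triangular_le_double_sum:
  fixes f :: "'a \<Rightarrow> nat"
  assumes "finite A" "card A = n" "\<And>a. a \<in> A \<Longrightarrow> 1 \<le> f a" "inj_on f {a\<in>A. f a < n}"
  shows "n * (n + 1) \<le> 2 * sum f A"
  using assms
proof (induction n arbitrary: A)
  case 0
  then show ?case by simp
next
  case (Suc n)
  obtain a where a: "a \<in> A" "Suc n \<le> f a"
  proof (rule ccontr)
    assume "\<not> thesis"
    then have small: "\<And>a. a \<in> A \<Longrightarrow> f a < Suc n"
      using Suc.prems that by (meson not_le)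
    then have "inj_on f A"
      using Suc.prems(4) by (simp add: Collect_conj_eq Int_absorb2 subsetI)
    moreover have "f ` A \<subseteq> {1..<Suc n}"
      using Suc.prems(3) small by fastforce
    ultimately have "card A \<le> card {1..<Suc n}"
      by (rule card_inj_on_le) simp
    then show False
      using Suc.prems(2) by simp
  qed
  have "n * (n + 1) \<le> 2 * sum f (A - {a})"
  proof (rule Suc.IH)
    show "inj_on f {x \<in> A - {a}. f x < n}"
      using Suc.prems(4) by (rule inj_on_subset) auto
  qed (use Suc.prems a in auto)
  moreover have "sum f A = f a + sum f (A - {a})"
    using a Suc.prems(1) by (simp add: sum.remove)
  ultimately show ?case
    using a by simp
qed

lemma triangular_le_double_sum_ages:
  assumes "N \<le> t"
  shows "N * (N + 1) \<le> 2 * (\<Sum>i<N. age \<sigma> c i t)"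
proof (rule triangular_le_double_sum)
  have "{i \<in> {..<N}. age \<sigma> c i t < N} \<subseteq> {i. age \<sigma> c i t < t}"
    using assms by auto
  then show "inj_on (\<lambda>i. age \<sigma> c i t) {i \<in> {..<N}. age \<sigma> c i t < N}"
    by (rule inj_on_subset[OF inj_on_age_below_slot])
qed (use age_ge_1 in auto)

lemma mean_age_ge:
  assumes "1 \<le> N" "N \<le> t"
  shows "(real N + 1) / 2 \<le> (1 / real N) * (\<Sum>i<N. real (age \<sigma> c i t))"
proof -
  have "real (N * (N + 1)) \<le> real (2 * (\<Sum>i<N. age \<sigma> c i t))"
    using triangular_le_double_sum_ages[OF assms(2)] by (simp only: of_nat_le_iff)
  then show ?thesis
    using assms(1) by (simp add: field_simps)
qed

lemma avg_age_ge_half_users: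
  assumes "1 \<le> N" "N * N \<le> T"
  shows "real N / 2 \<le> avg_age N T \<sigma> c"
proof -
  let ?mean = "\<lambda>t. (1 / real N) * (\<Sum>i<N. real (age \<sigma> c i t))"
  have "N \<le> T"
    using assms by (metis le_trans mult_le_mono1 nat_mult_1)
  have "real N * real T \<le> real (card {N..T}) * (real N + 1)"
  proof -
    have "real N * real N \<le> real T"
      using assms(2) by (metis of_nat_le_iff of_nat_mult)
    then show ?thesis
      using \<open>N \<le> T\<close> by (simp add: of_nat_diff algebra_simps)
  qed
  also have "\<dots> / 2 \<le> (\<Sum>t\<in>{N..T}. ?mean t)"
    using sum_bounded_below[of "{N..T}" "(real N + 1) / 2" ?mean] mean_age_ge[OF assms(1)]
    by simp
  also have "\<dots> \<le> (\<Sum>t=1..T. ?mean t)"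
    by (rule sum_mono2) (use assms(1) in \<open>auto simp: sum_nonneg\<close>)
  finally have "real N * real T / 2 \<le> (\<Sum>t=1..T. ?mean t)"
    by (simp add: divide_right_mono)
  moreover have "0 < real T"
    using \<open>N \<le> T\<close> assms(1) by simp
  ultimately show ?thesis
    unfolding avg_age_def by (simp add: field_simps)
qed

lemma average_le:
  fixes f :: "'a \<Rightarrow> real"
  assumes "\<And>x. x \<in> A \<Longrightarrow> f x \<le> K" "0 \<le> K"
  shows "(1 / real (card A)) * sum f A \<le> K"
proof -
  have "(1 / real (card A)) * sum f A \<le> (1 / real (card A)) * (real (card A) * K)"
    using sum_bounded_above[of A f K] assms(1) by (intro mult_left_mono) auto
  also have "\<dots> \<le> K"
    using assms(2) by (cases "card A = 0") simp_all
  finally show ?thesis .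
qed

lemma double_average_le:
  fixes h :: "nat \<Rightarrow> nat \<Rightarrow> real"
  assumes "\<And>t i. t \<in> {1..T} \<Longrightarrow> i < N \<Longrightarrow> h t i \<le> K" "0 \<le> K"
  shows "(1 / real T) * (\<Sum>t=1..T. (1 / real N) * (\<Sum>i<N. h t i)) \<le> K"
  using average_le[of "{1..T}" _ K] average_le[of "{..<N}" _ K] assms by simp

lemma avg_age_le_slots: "avg_age N T \<sigma> c \<le> real T"
  unfolding avg_age_def by (rule double_average_le) (auto intro: age_le_slot[THEN order_trans])

definition no_delivery ::
  "(nat \<Rightarrow> nat \<Rightarrow> nat) \<Rightarrow> nat \<Rightarrow> nat \<Rightarrow> nat \<Rightarrow> (nat \<Rightarrow> nat \<times> nat) set" where
  "no_delivery \<sigma> i m t = {c. \<forall>s\<in>{m..<t}. \<not> delivers \<sigma> i s (c s)}"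

lemma age_eq_sum_no_delivery:
  "1 \<le> t \<Longrightarrow> real (age \<sigma> c i t) = (\<Sum>m=1..t. indicator (no_delivery \<sigma> i m t) c)"
proof (induction t rule: nat_induct_at_least)
  case base
  then show ?case by (simp add: no_delivery_def)
next
  case (Suc t)
  have last: "(indicator (no_delivery \<sigma> i (Suc t) (Suc t)) c :: real) = 1"
    by (simp add: no_delivery_def)
  show ?case
  proof (cases "delivers \<sigma> i t (c t)")
    case True
    have "(\<Sum>m=1..t. indicator (no_delivery \<sigma> i m (Suc t)) c :: real) = 0"
      by (intro sum.neutral ballI) (use True in \<open>auto simp: no_delivery_def indicator_def\<close>)
    then show ?thesis
      using True last by simp
  next
    case False
    then have "(\<Sum>m=1..t. indicator (no_delivery \<sigma> i m (Suc t)) c :: real)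
        = (\<Sum>m=1..t. indicator (no_delivery \<sigma> i m t) c)"
      by (intro sum.cong) (auto simp: no_delivery_def indicator_def atLeastLessThanSuc)
    then show ?thesis
      using False last Suc by simp
  qed
qed

lemma card_unblocked_ge:
  assumes "feasible_block Nsub T \<alpha> \<sigma>" "s \<in> {1..T}"
  shows "Nsub - 1 \<le> card {j. j < Nsub \<and> \<sigma> j s = 1}"
proof -
  have "\<sigma> j s \<in> {0, 1}" if "j < Nsub" for j
    using assms that unfolding feasible_block_def by blast
  then have "{..<Nsub} = {j. j < Nsub \<and> \<sigma> j s = 1} \<union> {j. j < Nsub \<and> \<sigma> j s = 0}"
    by blast
  then have "Nsub \<le> card {j. j < Nsub \<and> \<sigma> j s = 1} + card {j. j < Nsub \<and> \<sigma> j s = 0}"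
    by (metis card_Un_le card_lessThan)
  moreover have "card {j. j < Nsub \<and> \<sigma> j s = 0} \<le> 1"
    using assms unfolding feasible_block_def by blast
  ultimately show ?thesis
    by linarith
qed

lemma prob_delivers_ge:
  assumes "feasible_block Nsub T \<alpha> \<sigma>" "s \<in> {1..T}" "i < N" "1 \<le> Nsub"
  shows "(real Nsub - 1) / (real N * real Nsub)
    \<le> measure (pmf_of_set ({..<N} \<times> {..<Nsub})) {x. delivers \<sigma> i s x}"
proof -
  let ?S = "{..<N} \<times> {..<Nsub}"
  have "?S \<inter> {x. delivers \<sigma> i s x} = {i} \<times> {j. j < Nsub \<and> \<sigma> j s = 1}"
    using assms(3) by (auto simp: delivers_def)
  then have "measure (pmf_of_set ?S) {x. delivers \<sigma> i s x}
      = real (card {j. j < Nsub \<and> \<sigma> j s = 1}) / (real N * real Nsub)"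
    using assms(3,4)
    by (subst measure_pmf_of_set) (auto simp: card_cartesian_product lessThan_empty_iff)
  moreover have "real Nsub - 1 \<le> real (card {j. j < Nsub \<and> \<sigma> j s = 1})"
    using card_unblocked_ge[OF assms(1,2)] assms(4) by linarith
  ultimately show ?thesis
    by (simp add: divide_right_mono)
qed

lemma prob_no_delivery_le:
  assumes "feasible_block Nsub T \<alpha> \<sigma>" "i < N" "1 \<le> Nsub" "1 \<le> m" "t \<le> T + 1"
  shows "measure (unif_policy N Nsub T) (no_delivery \<sigma> i m t)
    \<le> (1 - (real Nsub - 1) / (real N * real Nsub)) ^ (t - m)"
proof -
  let ?S = "{..<N} \<times> {..<Nsub}"
  let ?q = "1 - (real Nsub - 1) / (real N * real Nsub)"
  define B where "B s = (if s \<in> {m..<t} then UNIV - {x. delivers \<sigma> i s x} else UNIV)" for s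
  have "no_delivery \<sigma> i m t = Pi {1..T} B"
    using assms(4,5) by (auto simp: no_delivery_def B_def Pi_def)
  then have "measure (unif_policy N Nsub T) (no_delivery \<sigma> i m t)
      = (\<Prod>s\<in>{1..T}. measure (pmf_of_set ?S) (B s))"
    unfolding unif_policy_def by (simp add: measure_Pi_pmf_Pi)
  also have "\<dots> \<le> (\<Prod>s\<in>{1..T}. if s \<in> {m..<t} then ?q else 1)"
  proof (rule prod_mono)
    fix s assume "s \<in> {1..T}"
    moreover have "measure (pmf_of_set ?S) (UNIV - {x. delivers \<sigma> i s x})
        = 1 - measure (pmf_of_set ?S) {x. delivers \<sigma> i s x}"
      using measure_pmf.prob_compl[of "{x. delivers \<sigma> i s x}" "pmf_of_set ?S"] by simp
    ultimately show "0 \<le> measure (pmf_of_set ?S) (B s) \<and>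
        measure (pmf_of_set ?S) (B s) \<le> (if s \<in> {m..<t} then ?q else 1)"
      using prob_delivers_ge[OF assms(1) _ assms(2,3)] by (simp add: B_def)
  qed
  also have "\<dots> = ?q ^ (t - m)"
  proof -
    have "{1..T} \<inter> {s. s \<in> {m..<t}} = {m..<t}"
      using assms(4,5) by auto
    then show ?thesis
      by (simp add: prod.If_cases)
  qed
  finally show ?thesis .
qed

lemma sum_power_le_inverse:
  fixes q :: real
  assumes "0 \<le> q" "q < 1"
  shows "(\<Sum>k<n. q ^ k) \<le> 1 / (1 - q)"
  using sum_le_suminf[OF summable_geometric, of q "{..<n}"] suminf_geometric[of q] assms
  by simp

lemma expected_age_unif_le:
  assumes "feasible_block Nsub T \<alpha> \<sigma>" "i < N" "2 \<le> Nsub" "t \<in> {1..T}"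
  shows "measure_pmf.expectation (unif_policy N Nsub T) (\<lambda>c. real (age \<sigma> c i t))
    \<le> real N * real Nsub / (real Nsub - 1)"
proof -
  let ?p = "unif_policy N Nsub T"
  let ?q = "1 - (real Nsub - 1) / (real N * real Nsub)"
  have "measure_pmf.expectation ?p (\<lambda>c. real (age \<sigma> c i t))
      = measure_pmf.expectation ?p (\<lambda>c. \<Sum>m=1..t. indicator (no_delivery \<sigma> i m t) c)"
    using assms(4) by (simp add: age_eq_sum_no_delivery)
  also have "\<dots> = (\<Sum>m=1..t. measure ?p (no_delivery \<sigma> i m t))"
    by (subst Bochner_Integration.integral_sum)
      (auto intro: measure_pmf.integrable_const_bound[where B = 1])
  also have "\<dots> \<le> (\<Sum>m=1..t. ?q ^ (t - m))"
    using assms by (intro sum_mono prob_no_delivery_le) auto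
  also have "\<dots> = (\<Sum>k<t. ?q ^ k)"
    by (rule sum.reindex_bij_witness[of _ "\<lambda>k. t - k" "\<lambda>m. t - m"]) auto
  also have "\<dots> \<le> 1 / (1 - ?q)"
  proof (rule sum_power_le_inverse)
    have "real Nsub \<le> real N * real Nsub"
      using assms(2) by (simp add: mult_le_cancel_right1)
    then have "real Nsub - 1 \<le> real N * real Nsub"
      by linarith
    then show "0 \<le> ?q"
      using assms(2,3) by (simp add: divide_le_eq)
    show "?q < 1"
      using assms(2,3) by simp
  qed
  also have "\<dots> = real N * real Nsub / (real Nsub - 1)"
    by simp
  finally show ?thesis .
qed

lemma integrable_avg_age: "integrable (measure_pmf p) (avg_age N T \<sigma>)"
proof (rule measure_pmf.integrable_const_bound[where B = "real T"])
  have "0 \<le> avg_age N T \<sigma> c" for c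
    unfolding avg_age_def by (intro mult_nonneg_nonneg sum_nonneg) auto
  then show "AE c in measure_pmf p. norm (avg_age N T \<sigma> c) \<le> real T"
    using avg_age_le_slots by simp
qed simp

lemma Delta_ge_half_users:
  assumes "1 \<le> N" "N * N \<le> T"
  shows "real N / 2 \<le> Delta N T \<sigma> p"
  using integral_mono[OF _ integrable_avg_age avg_age_ge_half_users[OF assms]]
  by (simp add: Delta_def)

lemma Delta_le_slots: "Delta N T \<sigma> p \<le> real T"
  using integral_mono[OF integrable_avg_age _ avg_age_le_slots]
  by (simp add: Delta_def)

lemma finite_set_pmf_unif_policy:
  assumes "1 \<le> N" "1 \<le> Nsub"
  shows "finite (set_pmf (unif_policy N Nsub T))"
  unfolding unif_policy_def using assms
  by (subst set_Pi_pmf) (auto intro!: finite_PiE_dflt simp: lessThan_empty_iff)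

lemma Delta_unif_le:
  assumes "feasible_block Nsub T \<alpha> \<sigma>" "1 \<le> N" "2 \<le> Nsub"
  shows "Delta N T \<sigma> (unif_policy N Nsub T) \<le> real N * real Nsub / (real Nsub - 1)"
proof -
  let ?p = "unif_policy N Nsub T"
  have "integrable ?p f" for f :: "_ \<Rightarrow> real"
    using assms(2,3) by (intro integrable_measure_pmf_finite finite_set_pmf_unif_policy) auto
  then have "Delta N T \<sigma> ?p = (1 / real T) * (\<Sum>t=1..T. (1 / real N) *
      (\<Sum>i<N. measure_pmf.expectation ?p (\<lambda>c. real (age \<sigma> c i t))))"
    unfolding Delta_def avg_age_def
    by (simp add: Bochner_Integration.integral_sum)
  also have "\<dots> \<le> real N * real Nsub / (real Nsub - 1)"
    by (rule double_average_le) (use assms expected_age_unif_le in auto)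
  finally show ?thesis .
qed

lemma feasible_block_unblocked: "0 \<le> \<alpha> \<Longrightarrow> feasible_block Nsub T \<alpha> (\<lambda>_ _. 1)"
  by (simp add: feasible_block_def)

lemma Delta_unif_worst_le:
  assumes "1 \<le> N" "2 \<le> Nsub" "0 \<le> \<alpha>"
  shows "Delta_unif_worst N Nsub \<alpha> T \<le> real N * real Nsub / (real Nsub - 1)"
  unfolding Delta_unif_worst_def
  using feasible_block_unblocked[OF assms(3)] Delta_unif_le[OF _ assms(1,2)]
  by (intro cSUP_least) auto

lemma Delta_opt_ge_half_users:
  assumes "1 \<le> N" "1 \<le> Nsub" "N * N \<le> T" "0 \<le> \<alpha>"
  shows "real N / 2 \<le> Delta_opt N Nsub \<alpha> T"
proof -
  let ?F = "{\<sigma>. feasible_block Nsub T \<alpha> \<sigma>}"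
  let ?V = "{p. valid_policy N Nsub T p}"
  have p0: "return_pmf (\<lambda>_. (0, 0)) \<in> ?V"
    using assms(1,2) by (simp add: valid_policy_def)
  have "bdd_below ((\<lambda>p. Delta N T \<sigma> p) ` ?V)" for \<sigma>
    using Delta_ge_half_users[OF assms(1,3)] by (intro bdd_belowI) blast
  then have "bdd_above ((\<lambda>\<sigma>. INF p\<in>?V. Delta N T \<sigma> p) ` ?F)"
    using cINF_lower[OF _ p0] Delta_le_slots
    by (intro bdd_aboveI[where M = "real T"]) (blast intro: order_trans)
  moreover have "real N / 2 \<le> (INF p\<in>?V. Delta N T (\<lambda>_ _. 1) p)"
    using p0 Delta_ge_half_users[OF assms(1,3)] by (intro cINF_greatest) auto
  ultimately show ?thesis
    unfolding Delta_opt_def using feasible_block_unblocked[OF assms(4)]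
    by (intro cSUP_upper2) auto
qed

theorem theorem11:
  fixes N Nsub :: nat and \<alpha> :: real
  assumes "N \<ge> 1" and "Nsub \<ge> 2" and "0 < \<alpha>" and "\<alpha> < 1"
  shows "limsup (\<lambda>T. ereal (Delta_unif_worst N Nsub \<alpha> T / Delta_opt N Nsub \<alpha> T))
           \<le> ereal (2 * real Nsub / (real Nsub - 1))"
proof (rule Limsup_bounded, unfold eventually_sequentially, intro exI allI impI)
  fix T assume "N * N \<le> T"
  then have "Delta_unif_worst N Nsub \<alpha> T / Delta_opt N Nsub \<alpha> T
      \<le> (real N * real Nsub / (real Nsub - 1)) / (real N / 2)"
    using assms Delta_unif_worst_le Delta_opt_ge_half_users by (intro frac_le) auto
  also have "\<dots> = 2 * real Nsub / (real Nsub - 1)"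
    using assms(1) by simp
  finally show "ereal (Delta_unif_worst N Nsub \<alpha> T / Delta_opt N Nsub \<alpha> T)
      \<le> ereal (2 * real Nsub / (real Nsub - 1))"
    by simp
qed

end
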